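(* Let $A_1A_2A_3$ be a gyrotriangle in the Einstein gyrovector space $\mathbb{R}^n_s$ that possesses a circumgyrocircle, with circumgyrocenter $O$ and circumgyroradius $R$, and let $\gamma_{ij}=\gamma_{\ominus A_i\oplus A_j}$, $\gamma_R=(1-R^2/s^2)^{-1/2}$. Let $A\in(A_1\oplus\mathrm{span}\{\ominus A_1\oplus A_2,\ominus A_1\oplus A_3\})\cap\mathbb{R}^n_s$ have gyrobarycentric representation $A=\frac{m_1\gamma_{A_1}A_1+m_2\gamma_{A_2}A_2+m_3\gamma_{A_3}A_3}{m_1\gamma_{A_1}+m_2\gamma_{A_2}+m_3\gamma_{A_3}}$, and let $d=\|\ominus A\oplus O\|$. Then $$d=\sqrt{1-\frac{2s^2K}{M^2\gamma_R^2R^2}}\;R,$$ where $K=m_1m_2(\gamma_{12}-1)+m_1m_3(\gamma_{13}-1)+m_2m_3(\gamma_{23}-1)$ and $M=m_1+m_2+m_3$.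
   Context: Fix $s>0$, $n\ge2$; $\mathbb{R}^n_s=\{v\in\mathbb{R}^n:\|v\|<s\}$ with Einstein addition $u\oplus v=\frac{1}{1+u\cdot v/s^2}\{u+\frac{1}{\gamma_u}v+\frac{1}{s^2}\frac{\gamma_u}{1+\gamma_u}(u\cdot v)u\}$, $\gamma_v=(1-\|v\|^2/s^2)^{-1/2}$, $\ominus v=-v$. A gyrotriangle $A_1A_2A_3$ has $\ominus A_1\oplus A_2,\ominus A_1\oplus A_3$ linearly independent. Its circumgyrocenter is the point $O$ of $(A_1\oplus\mathrm{span}\{\ominus A_1\oplus A_2,\ominus A_1\oplus A_3\})\cap\mathbb{R}^n_s$ equigyrodistant from the vertices; the circumgyroradius is $R=\|\ominus A_1\oplus O\|$; the circumgyrocircle is the set of points of that gyroplane at gyrodistance $R$ from $O$. *)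

theory Defs
  imports "HOL-Analysis.Analysis"
begin

definition ein_gamma :: "real \<Rightarrow> real^'n \<Rightarrow> real" where
  "ein_gamma s v = 1 / sqrt (1 - (norm v)\<^sup>2 / s\<^sup>2)"

definition ein_ball :: "real \<Rightarrow> (real^'n) set" where
  "ein_ball s = {v. norm v < s}"

definition ein_add :: "real \<Rightarrow> real^'n \<Rightarrow> real^'n \<Rightarrow> real^'n" where
  "ein_add s u v =
     (1 / (1 + (u \<bullet> v) / s\<^sup>2)) *\<^sub>R
       (u + (1 / ein_gamma s u) *\<^sub>R v
          + ((1 / s\<^sup>2) * (ein_gamma s u / (1 + ein_gamma s u)) * (u \<bullet> v)) *\<^sub>R u)"

definition ein_gyrodist :: "real \<Rightarrow> real^'n \<Rightarrow> real^'n \<Rightarrow> real" where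
  "ein_gyrodist s x y = norm (ein_add s (- x) y)"

definition gyrotriangle :: "real \<Rightarrow> real^'n \<Rightarrow> real^'n \<Rightarrow> real^'n \<Rightarrow> bool" where
  "gyrotriangle s A1 A2 A3 \<longleftrightarrow>
     A1 \<in> ein_ball s \<and> A2 \<in> ein_ball s \<and> A3 \<in> ein_ball s \<and>
     (\<forall>a b. a *\<^sub>R ein_add s (- A1) A2 + b *\<^sub>R ein_add s (- A1) A3 = 0 \<longrightarrow> a = 0 \<and> b = 0)"

definition gyroplane :: "real \<Rightarrow> real^'n \<Rightarrow> real^'n \<Rightarrow> real^'n \<Rightarrow> (real^'n) set" where
  "gyroplane s A1 A2 A3 =
     (ein_add s A1 ` span {ein_add s (- A1) A2, ein_add s (- A1) A3}) \<inter> ein_ball s"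

definition circumgyrocenter :: "real \<Rightarrow> real^'n \<Rightarrow> real^'n \<Rightarrow> real^'n \<Rightarrow> real^'n \<Rightarrow> bool" where
  "circumgyrocenter s A1 A2 A3 Oc \<longleftrightarrow>
     Oc \<in> gyroplane s A1 A2 A3 \<and>
     ein_gyrodist s A1 Oc = ein_gyrodist s A2 Oc \<and>
     ein_gyrodist s A1 Oc = ein_gyrodist s A3 Oc"

end

theory Submission
  imports Defs
begin

text \<open>Everything reduces to the gamma identity
  \<open>\<gamma>(\<ominus>P \<oplus> Q) = \<gamma>\<^sub>P \<gamma>\<^sub>Q (1 - P\<cdot>Q/s\<^sup>2)\<close>, which makes \<open>\<gamma>\<^sub>P\<close> and \<open>\<gamma>\<^sub>P P\<close> behave like the time
  and space components of a Lorentz vector. For a gyrobarycentric point \<open>A = S/N\<close> with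
  \<open>N = \<Sum>m\<^sub>i\<gamma>\<^sub>i\<close> and \<open>S = \<Sum>m\<^sub>i\<gamma>\<^sub>iA\<^sub>i\<close>, bilinearity gives
  \<open>N\<^sup>2 - \<parallel>S\<parallel>\<^sup>2/s\<^sup>2 = \<Sum>\<^sub>i\<^sub>j m\<^sub>im\<^sub>j\<gamma>\<^sub>i\<^sub>j\<close> and \<open>N - S\<cdot>Q/s\<^sup>2 = \<Sum>m\<^sub>i\<gamma>(\<ominus>A\<^sub>i\<oplus>Q)/\<gamma>\<^sub>Q\<close>, hence
  \<open>\<gamma>(\<ominus>A\<oplus>Q)\<^sup>2 \<Sum>\<^sub>i\<^sub>j m\<^sub>im\<^sub>j\<gamma>\<^sub>i\<^sub>j = (\<Sum>m\<^sub>i\<gamma>(\<ominus>A\<^sub>i\<oplus>Q))\<^sup>2\<close>. For three vertices and the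
  circumgyrocenter \<open>Q = O\<close> the left sum is \<open>M\<^sup>2 + 2K\<close> and the right one is \<open>M\<gamma>\<^sub>R\<close>; solving for
  \<open>d\<close> gives the formula.\<close>

lemma mem_ein_ball: "v \<in> ein_ball s \<longleftrightarrow> norm v < s"
  by (simp add: ein_ball_def)

lemma ein_gamma_defect_pos:
  assumes "s > 0" "v \<in> ein_ball s"
  shows "1 - (norm v)\<^sup>2 / s\<^sup>2 > 0"
proof -
  have "(norm v)\<^sup>2 < s\<^sup>2"
    using assms by (simp add: mem_ein_ball power_strict_mono)
  then show ?thesis using assms(1) by (simp add: field_simps)
qed

lemma ein_gamma_pos:
  assumes "s > 0" "v \<in> ein_ball s"
  shows "ein_gamma s v > 0"
  using ein_gamma_defect_pos[OF assms] by (simp add: ein_gamma_def)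

lemma ein_gamma_sq_mult_defect:
  assumes "s > 0" "v \<in> ein_ball s"
  shows "(ein_gamma s v)\<^sup>2 * (1 - (norm v)\<^sup>2 / s\<^sup>2) = 1"
  using ein_gamma_defect_pos[OF assms] by (simp add: ein_gamma_def power_divide divide_simps)

lemma norm_sq_eq_ein_gamma:
  assumes "s > 0" "v \<in> ein_ball s"
  shows "(norm v)\<^sup>2 = s\<^sup>2 * (1 - 1 / (ein_gamma s v)\<^sup>2)"
  using ein_gamma_sq_mult_defect[OF assms] ein_gamma_pos[OF assms] assms(1)
  by (simp add: field_simps)

lemma ein_gamma_eq_1_imp_zero:
  assumes "s > 0" "v \<in> ein_ball s" "ein_gamma s v = 1"
  shows "v = 0"
  using norm_sq_eq_ein_gamma[OF assms(1,2)] assms(3) by simp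

lemma ein_add_denominator_pos:
  assumes "s > 0" "u \<in> ein_ball s" "v \<in> ein_ball s"
  shows "1 + (u \<bullet> v) / s\<^sup>2 > 0"
proof -
  have "\<bar>u \<bullet> v\<bar> \<le> norm u * norm v" by (rule Cauchy_Schwarz_ineq2)
  also have "\<dots> < s * s"
    using assms by (simp add: mem_ein_ball mult_strict_mono')
  finally have "\<bar>u \<bullet> v\<bar> < s\<^sup>2" by (simp add: power2_eq_square)
  then show ?thesis using assms(1) by (simp add: field_simps abs_less_iff)
qed

lemma ein_add_eq:
  "ein_add s u v =
     (1 / (1 + (u \<bullet> v) / s\<^sup>2)) *\<^sub>R
       ((1 + ein_gamma s u / (1 + ein_gamma s u) * ((u \<bullet> v) / s\<^sup>2)) *\<^sub>R u
          + (1 / ein_gamma s u) *\<^sub>R v)"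
  by (simp add: ein_add_def algebra_simps)

lemma ein_add_norm_defect:
  assumes s: "s > 0" and u: "u \<in> ein_ball s" and v: "v \<in> ein_ball s"
  shows "1 - (norm (ein_add s u v))\<^sup>2 / s\<^sup>2
           = (1 - (norm u)\<^sup>2 / s\<^sup>2) * (1 - (norm v)\<^sup>2 / s\<^sup>2) / (1 + (u \<bullet> v) / s\<^sup>2)\<^sup>2"
proof -
  define g where "g = ein_gamma s u"
  define a where "a = (u \<bullet> v) / s\<^sup>2"
  define c where "c = 1 + g / (1 + g) * a"
  have g: "g > 0" using ein_gamma_pos[OF s u] by (simp add: g_def)
  have a: "1 + a > 0" using ein_add_denominator_pos[OF s u v] by (simp add: a_def)
  have nu: "(norm u)\<^sup>2 = s\<^sup>2 * (1 - 1 / g\<^sup>2)"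
    using norm_sq_eq_ein_gamma[OF s u] by (simp add: g_def)
  have uv: "u \<bullet> v = s\<^sup>2 * a" using s by (simp add: a_def)
  have "c * (1 + g) = 1 + g + g * a" using g unfolding c_def by (simp add: field_simps)
  then have "(c\<^sup>2 * (g\<^sup>2 - 1) + 2 * c * a * g - (1 + a)\<^sup>2 * g\<^sup>2 + 1) * (1 + g)\<^sup>2 = 0" by algebra
  then have "c\<^sup>2 * (g\<^sup>2 - 1) + 2 * c * a * g = (1 + a)\<^sup>2 * g\<^sup>2 - 1" using g by simp
  then have key: "c\<^sup>2 * (1 - 1 / g\<^sup>2) + 2 * c / g * a = (1 + a)\<^sup>2 - 1 / g\<^sup>2"
    using g by (simp add: field_simps power2_eq_square)
  have "ein_add s u v = (1 / (1 + a)) *\<^sub>R (c *\<^sub>R u + (1 / g) *\<^sub>R v)"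
    unfolding ein_add_eq g_def a_def c_def ..
  then have "(norm (ein_add s u v))\<^sup>2
      = (1 / (1 + a))\<^sup>2 * (c\<^sup>2 * (norm u)\<^sup>2 + 2 * c * (1 / g) * (u \<bullet> v) + (1 / g)\<^sup>2 * (norm v)\<^sup>2)"
    unfolding power2_norm_eq_inner
    by (simp add: inner_add_left inner_add_right inner_commute power2_eq_square algebra_simps)
  also have "\<dots> = (s\<^sup>2 * (c\<^sup>2 * (1 - 1 / g\<^sup>2) + 2 * c / g * a) + (norm v)\<^sup>2 / g\<^sup>2) / (1 + a)\<^sup>2"
    unfolding nu uv using a g by (simp add: field_simps)
  also have "\<dots> = (s\<^sup>2 * (1 + a)\<^sup>2 - s\<^sup>2 * (1 - (norm v)\<^sup>2 / s\<^sup>2) / g\<^sup>2) / (1 + a)\<^sup>2"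
    unfolding key using s g a by (simp add: field_simps)
  finally have "1 - (norm (ein_add s u v))\<^sup>2 / s\<^sup>2 = (1 / g\<^sup>2) * (1 - (norm v)\<^sup>2 / s\<^sup>2) / (1 + a)\<^sup>2"
    using s g a by (simp add: field_simps)
  moreover have "1 - (norm u)\<^sup>2 / s\<^sup>2 = 1 / g\<^sup>2" using nu s by simp
  ultimately show ?thesis by (simp add: a_def)
qed

lemma ein_gamma_ein_add:
  assumes s: "s > 0" and u: "u \<in> ein_ball s" and v: "v \<in> ein_ball s"
  shows "ein_add s u v \<in> ein_ball s"
    and "ein_gamma s (ein_add s u v) = ein_gamma s u * ein_gamma s v * (1 + (u \<bullet> v) / s\<^sup>2)"
proof -
  note du = ein_gamma_defect_pos[OF s u] and dv = ein_gamma_defect_pos[OF s v]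
  note a = ein_add_denominator_pos[OF s u v]
  have pos: "1 - (norm (ein_add s u v))\<^sup>2 / s\<^sup>2 > 0"
    unfolding ein_add_norm_defect[OF s u v] using du dv a by simp
  then have "(norm (ein_add s u v))\<^sup>2 < s\<^sup>2" using s by (simp add: field_simps)
  then show "ein_add s u v \<in> ein_ball s"
    using s by (simp add: mem_ein_ball power2_less_imp_less)
  have "ein_gamma s (ein_add s u v) = 1 / sqrt (1 - (norm (ein_add s u v))\<^sup>2 / s\<^sup>2)"
    by (simp add: ein_gamma_def)
  also have "\<dots> = (1 + (u \<bullet> v) / s\<^sup>2) / (sqrt (1 - (norm u)\<^sup>2 / s\<^sup>2) * sqrt (1 - (norm v)\<^sup>2 / s\<^sup>2))"
    unfolding ein_add_norm_defect[OF s u v] using a by (simp add: real_sqrt_mult real_sqrt_divide)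
  finally show "ein_gamma s (ein_add s u v) = ein_gamma s u * ein_gamma s v * (1 + (u \<bullet> v) / s\<^sup>2)"
    by (simp add: ein_gamma_def)
qed

lemma ein_gamma_uminus [simp]: "ein_gamma s (- v) = ein_gamma s v"
  by (simp add: ein_gamma_def)

lemma uminus_mem_ein_ball [simp]: "- v \<in> ein_ball s \<longleftrightarrow> v \<in> ein_ball s"
  by (simp add: mem_ein_ball)

lemma ein_gyrodiff_mem_ball:
  assumes "s > 0" "P \<in> ein_ball s" "Q \<in> ein_ball s"
  shows "ein_add s (- P) Q \<in> ein_ball s"
  using ein_gamma_ein_add(1)[of s "- P" Q] assms by simp

lemma ein_gamma_gyrodiff:
  assumes "s > 0" "P \<in> ein_ball s" "Q \<in> ein_ball s"
  shows "ein_gamma s (ein_add s (- P) Q) = ein_gamma s P * ein_gamma s Q * (1 - (P \<bullet> Q) / s\<^sup>2)"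
  using ein_gamma_ein_add(2)[of s "- P" Q] assms by simp

lemma ein_gamma_gyrodiff_commute:
  assumes "s > 0" "P \<in> ein_ball s" "Q \<in> ein_ball s"
  shows "ein_gamma s (ein_add s (- Q) P) = ein_gamma s (ein_add s (- P) Q)"
  using assms by (simp add: ein_gamma_gyrodiff inner_commute)

lemma ein_gamma_gyrodiff_self:
  assumes "s > 0" "P \<in> ein_ball s"
  shows "ein_gamma s (ein_add s (- P) P) = 1"
  by (metis ein_gamma_sq_mult_defect[OF assms] ein_gamma_gyrodiff[OF assms assms(2)]
      dot_square_norm power2_eq_square)

lemma ein_gyrodiff_self:
  assumes "s > 0" "P \<in> ein_ball s"
  shows "ein_add s (- P) P = 0"
  using ein_gamma_eq_1_imp_zero ein_gyrodiff_mem_ball ein_gamma_gyrodiff_self assms by blast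

lemma ein_gyrodiff_eq_0_imp_eq:
  assumes s: "s > 0" and P: "P \<in> ein_ball s" and Q: "Q \<in> ein_ball s"
    and z: "ein_add s (- P) Q = 0"
  shows "Q = P"
proof -
  define g where "g = ein_gamma s P"
  define a where "a = ((- P) \<bullet> Q) / s\<^sup>2"
  define l where "l = g * (1 + g / (1 + g) * a)"
  have g: "g > 0" using ein_gamma_pos[OF s P] by (simp add: g_def)
  have "1 + a > 0" using ein_add_denominator_pos[of s "- P" Q] s P Q by (simp add: a_def)
  moreover have "(1 / (1 + a)) *\<^sub>R ((1 + g / (1 + g) * a) *\<^sub>R (- P) + (1 / g) *\<^sub>R Q) = 0"
    using z unfolding ein_add_eq ein_gamma_uminus g_def[symmetric] a_def[symmetric] .
  ultimately have "(1 + g / (1 + g) * a) *\<^sub>R (- P) + (1 / g) *\<^sub>R Q = 0" by simp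
  then have Qg: "(1 / g) *\<^sub>R Q = (1 + g / (1 + g) * a) *\<^sub>R P"
    by (metis add.commute eq_neg_iff_add_eq_0 minus_minus scaleR_minus_right)
  have "Q = g *\<^sub>R ((1 / g) *\<^sub>R Q)" using g by simp
  then have Ql: "Q = l *\<^sub>R P" unfolding Qg l_def by simp
  have "a = - l * ((norm P)\<^sup>2 / s\<^sup>2)" unfolding a_def Ql by (simp add: power2_norm_eq_inner)
  also have "(norm P)\<^sup>2 / s\<^sup>2 = 1 - 1 / g\<^sup>2" using norm_sq_eq_ein_gamma[OF s P] s by (simp add: g_def)
  finally have aeq: "a = - l * (1 - 1 / g\<^sup>2)" .
  have g1: "1 + g \<noteq> 0" using g by simp
  have "l * (1 + g) = g * (1 + g) + g\<^sup>2 * a"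
    unfolding l_def using g1 by (simp add: field_simps power2_eq_square)
  also have "g\<^sup>2 * a = - l * (g\<^sup>2 - 1)"
    unfolding aeq using g by (simp add: field_simps)
  finally have "l * g * (1 + g) = g * (1 + g)" by (simp add: algebra_simps power2_eq_square)
  then have "l = 1" using g g1 by simp
  then show ?thesis using Ql by simp
qed

definition gyrobarycentric :: "real \<Rightarrow> ('i \<Rightarrow> real) \<Rightarrow> ('i \<Rightarrow> real^'n) \<Rightarrow> 'i set \<Rightarrow> real^'n" where
  "gyrobarycentric s m P I =
     (1 / (\<Sum>i\<in>I. m i * ein_gamma s (P i))) *\<^sub>R (\<Sum>i\<in>I. (m i * ein_gamma s (P i)) *\<^sub>R P i)"

lemma gyrobarycentric_defect:
  assumes s: "s > 0" and P: "\<And>i. i \<in> I \<Longrightarrow> P i \<in> ein_ball s"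
  shows "(\<Sum>i\<in>I. m i * ein_gamma s (P i))\<^sup>2
           - (norm (\<Sum>i\<in>I. (m i * ein_gamma s (P i)) *\<^sub>R P i))\<^sup>2 / s\<^sup>2
         = (\<Sum>i\<in>I. \<Sum>j\<in>I. m i * m j * ein_gamma s (ein_add s (- P i) (P j)))"
proof -
  define w where "w i = m i * ein_gamma s (P i)" for i
  have "(norm (\<Sum>i\<in>I. w i *\<^sub>R P i))\<^sup>2 = (\<Sum>i\<in>I. \<Sum>j\<in>I. w i * w j * (P i \<bullet> P j))"
    unfolding power2_norm_eq_inner
    by (simp add: inner_sum_left inner_sum_right sum_distrib_left inner_commute algebra_simps)
  then have "(\<Sum>i\<in>I. w i)\<^sup>2 - (norm (\<Sum>i\<in>I. w i *\<^sub>R P i))\<^sup>2 / s\<^sup>2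
      = (\<Sum>i\<in>I. \<Sum>j\<in>I. w i * w j * (1 - (P i \<bullet> P j) / s\<^sup>2))"
    by (simp add: power2_eq_square sum_product sum_subtractf sum_divide_distrib algebra_simps)
  also have "\<dots> = (\<Sum>i\<in>I. \<Sum>j\<in>I. m i * m j * ein_gamma s (ein_add s (- P i) (P j)))"
    by (intro sum.cong refl) (simp add: w_def ein_gamma_gyrodiff[OF s P P])
  finally show ?thesis unfolding w_def .
qed

lemma gyrobarycentric_inner_defect:
  assumes s: "s > 0" and P: "\<And>i. i \<in> I \<Longrightarrow> P i \<in> ein_ball s" and Q: "Q \<in> ein_ball s"
  shows "(\<Sum>i\<in>I. m i * ein_gamma s (P i))
           - ((\<Sum>i\<in>I. (m i * ein_gamma s (P i)) *\<^sub>R P i) \<bullet> Q) / s\<^sup>2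
         = (\<Sum>i\<in>I. m i * ein_gamma s (ein_add s (- P i) Q)) / ein_gamma s Q"
proof -
  have "ein_gamma s Q \<noteq> 0" using ein_gamma_pos[OF s Q] by simp
  then show ?thesis
    by (simp add: ein_gamma_gyrodiff[OF s P Q] inner_sum_left sum_divide_distrib
        flip: sum_subtractf) (simp add: algebra_simps)
qed

lemma ein_gamma_gyrobarycentric_gyrodiff:
  assumes s: "s > 0" and P: "\<And>i. i \<in> I \<Longrightarrow> P i \<in> ein_ball s" and Q: "Q \<in> ein_ball s"
    and N: "(\<Sum>i\<in>I. m i * ein_gamma s (P i)) \<noteq> 0"
    and A: "gyrobarycentric s m P I \<in> ein_ball s"
  shows "(ein_gamma s (ein_add s (- gyrobarycentric s m P I) Q))\<^sup>2
           * (\<Sum>i\<in>I. \<Sum>j\<in>I. m i * m j * ein_gamma s (ein_add s (- P i) (P j)))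
         = (\<Sum>i\<in>I. m i * ein_gamma s (ein_add s (- P i) Q))\<^sup>2"
proof -
  define N where "N = (\<Sum>i\<in>I. m i * ein_gamma s (P i))"
  define S where "S = (\<Sum>i\<in>I. (m i * ein_gamma s (P i)) *\<^sub>R P i)"
  define T where "T = (\<Sum>i\<in>I. m i * ein_gamma s (ein_add s (- P i) Q))"
  define D where "D = (\<Sum>i\<in>I. \<Sum>j\<in>I. m i * m j * ein_gamma s (ein_add s (- P i) (P j)))"
  define B where "B = gyrobarycentric s m P I"
  have N0: "N \<noteq> 0" using N by (simp add: N_def)
  have BS: "B = (1 / N) *\<^sub>R S" by (simp add: B_def gyrobarycentric_def N_def S_def)
  have "D = N\<^sup>2 - (norm S)\<^sup>2 / s\<^sup>2"
    unfolding D_def N_def S_def by (rule gyrobarycentric_defect[OF s P, symmetric])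
  also have "\<dots> = N\<^sup>2 * (1 - (norm B)\<^sup>2 / s\<^sup>2)"
    using N0 by (simp add: BS power_divide field_simps)
  finally have gB: "(ein_gamma s B)\<^sup>2 * D = N\<^sup>2"
    using ein_gamma_sq_mult_defect[OF s A] by (simp add: B_def)
  have "N * (1 - (B \<bullet> Q) / s\<^sup>2) = N - (S \<bullet> Q) / s\<^sup>2"
    using N0 by (simp add: BS field_simps)
  also have "\<dots> = T / ein_gamma s Q"
    unfolding N_def S_def T_def by (rule gyrobarycentric_inner_defect[OF s P Q])
  finally have NT: "N * (1 - (B \<bullet> Q) / s\<^sup>2) * ein_gamma s Q = T"
    using ein_gamma_pos[OF s Q] by (simp add: field_simps)
  have "ein_gamma s (ein_add s (- B) Q) * N
      = ein_gamma s B * (N * (1 - (B \<bullet> Q) / s\<^sup>2) * ein_gamma s Q)"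
    using A by (simp add: ein_gamma_gyrodiff[OF s _ Q] B_def mult_ac)
  then have "ein_gamma s (ein_add s (- B) Q) * N = ein_gamma s B * T" unfolding NT .
  then have "(ein_gamma s (ein_add s (- B) Q))\<^sup>2 * D * N\<^sup>2 = T\<^sup>2 * N\<^sup>2"
    using gB by (metis (no_types, lifting) mult.commute mult.left_commute power_mult_distrib)
  then show ?thesis using N0 by (simp add: B_def D_def T_def)
qed

lemma ein_gamma_gyrobarycentric3_gyrodiff:
  assumes s: "s > 0" and A1: "A1 \<in> ein_ball s" and A2: "A2 \<in> ein_ball s" and A3: "A3 \<in> ein_ball s"
    and Q: "Q \<in> ein_ball s" and A: "A \<in> ein_ball s"
    and N: "m1 * ein_gamma s A1 + m2 * ein_gamma s A2 + m3 * ein_gamma s A3 \<noteq> 0"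
    and A_eq: "A = (1 / (m1 * ein_gamma s A1 + m2 * ein_gamma s A2 + m3 * ein_gamma s A3)) *\<^sub>R
               ((m1 * ein_gamma s A1) *\<^sub>R A1 + (m2 * ein_gamma s A2) *\<^sub>R A2
                 + (m3 * ein_gamma s A3) *\<^sub>R A3)"
  shows "(ein_gamma s (ein_add s (- A) Q))\<^sup>2
           * ((m1 + m2 + m3)\<^sup>2 + 2 * (m1 * m2 * (ein_gamma s (ein_add s (- A1) A2) - 1)
                + m1 * m3 * (ein_gamma s (ein_add s (- A1) A3) - 1)
                + m2 * m3 * (ein_gamma s (ein_add s (- A2) A3) - 1)))
         = (m1 * ein_gamma s (ein_add s (- A1) Q) + m2 * ein_gamma s (ein_add s (- A2) Q)
              + m3 * ein_gamma s (ein_add s (- A3) Q))\<^sup>2"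
proof -
  define m where "m = (!) [m1, m2, m3]"
  define P where "P = (!) [A1, A2, A3]"
  have P: "P i \<in> ein_ball s" if "i \<in> {..<3}" for i
    using that A1 A2 A3 by (auto simp: P_def less_Suc_eq numeral_3_eq_3)
  have "A = gyrobarycentric s m P {..<3}"
    using A_eq by (simp add: gyrobarycentric_def m_def P_def numeral_3_eq_3 lessThan_Suc ac_simps)
  moreover have "(\<Sum>i<3. m i * ein_gamma s (P i)) \<noteq> 0"
    using N by (simp add: m_def P_def numeral_3_eq_3 lessThan_Suc ac_simps)
  ultimately show ?thesis
    using ein_gamma_gyrobarycentric_gyrodiff[of s "{..<3}" P Q m] s P Q A
    by (simp add: m_def P_def numeral_3_eq_3 lessThan_Suc ein_gamma_gyrodiff_self A1 A2 A3
        ein_gamma_gyrodiff_commute[OF s A1 A2] ein_gamma_gyrodiff_commute[OF s A1 A3]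
        ein_gamma_gyrodiff_commute[OF s A2 A3] algebra_simps power2_eq_square)
qed

lemma circumgyroradius_neq_0:
  assumes s: "s > 0" and tri: "gyrotriangle s A1 A2 A3" and O: "circumgyrocenter s A1 A2 A3 Oc"
  shows "ein_gyrodist s A1 Oc \<noteq> 0"
proof
  assume R0: "ein_gyrodist s A1 Oc = 0"
  have A1: "A1 \<in> ein_ball s" and A2: "A2 \<in> ein_ball s"
    and indep: "\<And>a b. a *\<^sub>R ein_add s (- A1) A2 + b *\<^sub>R ein_add s (- A1) A3 = 0 \<Longrightarrow> a = 0 \<and> b = 0"
    using tri by (simp_all add: gyrotriangle_def)
  have Oc: "Oc \<in> ein_ball s" and "ein_gyrodist s A2 Oc = 0"
    using O R0 by (auto simp: circumgyrocenter_def gyroplane_def)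
  then have "Oc = A1" "Oc = A2"
    using R0 ein_gyrodiff_eq_0_imp_eq[OF s A1 Oc] ein_gyrodiff_eq_0_imp_eq[OF s A2 Oc]
    by (auto simp: ein_gyrodist_def)
  then have "ein_add s (- A1) A2 = 0" using ein_gyrodiff_self[OF s A1] by simp
  then show False using indep[of 1 0] by simp
qed

lemma norm_eq_of_ein_gamma_sq_eq:
  assumes s: "s > 0" and v: "v \<in> ein_ball s" and w: "w \<in> ein_ball s" and "w \<noteq> 0" "M \<noteq> 0"
    and eq: "(ein_gamma s v)\<^sup>2 * (M\<^sup>2 + 2 * K) = (M * ein_gamma s w)\<^sup>2"
  shows "norm v = sqrt (1 - 2 * s\<^sup>2 * K / (M\<^sup>2 * (ein_gamma s w)\<^sup>2 * (norm w)\<^sup>2)) * norm w"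
proof -
  define g where "g = ein_gamma s w"
  have g: "g > 0" using ein_gamma_pos[OF s w] by (simp add: g_def)
  have "1 / (ein_gamma s v)\<^sup>2 = (M\<^sup>2 + 2 * K) / (M * g)\<^sup>2"
    using eq ein_gamma_pos[OF s v] g \<open>M \<noteq> 0\<close> by (simp add: g_def field_simps)
  then have "(norm v)\<^sup>2 = s\<^sup>2 * (1 - (M\<^sup>2 + 2 * K) / (M * g)\<^sup>2)"
    using norm_sq_eq_ein_gamma[OF s v] by simp
  also have "\<dots> = s\<^sup>2 * (1 - 1 / g\<^sup>2) - 2 * s\<^sup>2 * K / (M\<^sup>2 * g\<^sup>2)"
    using g \<open>M \<noteq> 0\<close> by (simp add: field_simps power2_eq_square)
  also have "\<dots> = (1 - 2 * s\<^sup>2 * K / (M\<^sup>2 * g\<^sup>2 * (norm w)\<^sup>2)) * (norm w)\<^sup>2"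
    using norm_sq_eq_ein_gamma[OF s w] \<open>w \<noteq> 0\<close> by (simp add: g_def[symmetric] field_simps)
  finally have "norm v = sqrt ((1 - 2 * s\<^sup>2 * K / (M\<^sup>2 * g\<^sup>2 * (norm w)\<^sup>2)) * (norm w)\<^sup>2)"
    by (metis norm_ge_zero real_sqrt_unique)
  then show ?thesis by (simp add: real_sqrt_mult g_def)
qed

theorem mainTheorem12:
  fixes s R d m1 m2 m3 :: real and A1 A2 A3 Oc A :: "real^'n"
  assumes "s > 0" and "CARD('n) \<ge> 2"
    and "gyrotriangle s A1 A2 A3"
    and "circumgyrocenter s A1 A2 A3 Oc"
    and "R = ein_gyrodist s A1 Oc"
    and "A \<in> gyroplane s A1 A2 A3"
    and "m1 * ein_gamma s A1 + m2 * ein_gamma s A2 + m3 * ein_gamma s A3 \<noteq> 0"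
    and "A = (1 / (m1 * ein_gamma s A1 + m2 * ein_gamma s A2 + m3 * ein_gamma s A3)) *\<^sub>R
               ((m1 * ein_gamma s A1) *\<^sub>R A1 + (m2 * ein_gamma s A2) *\<^sub>R A2
                 + (m3 * ein_gamma s A3) *\<^sub>R A3)"
    and "m1 + m2 + m3 \<noteq> 0"
    and "d = ein_gyrodist s A Oc"
  shows "d = sqrt (1 - 2 * s\<^sup>2 *
                 (m1 * m2 * (ein_gamma s (ein_add s (- A1) A2) - 1)
                + m1 * m3 * (ein_gamma s (ein_add s (- A1) A3) - 1)
                + m2 * m3 * (ein_gamma s (ein_add s (- A2) A3) - 1))
               / ((m1 + m2 + m3)\<^sup>2 * (1 / sqrt (1 - R\<^sup>2 / s\<^sup>2))\<^sup>2 * R\<^sup>2)) * R"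
proof -
  note s = assms(1)
  have A1: "A1 \<in> ein_ball s" and A2: "A2 \<in> ein_ball s" and A3: "A3 \<in> ein_ball s"
    using assms(3) by (simp_all add: gyrotriangle_def)
  have Oc: "Oc \<in> ein_ball s" and A: "A \<in> ein_ball s"
    using assms(4,6) by (auto simp: circumgyrocenter_def gyroplane_def)
  define gR where "gR = ein_gamma s (ein_add s (- A1) Oc)"
  have "ein_gamma s (ein_add s (- A2) Oc) = gR" "ein_gamma s (ein_add s (- A3) Oc) = gR"
    using assms(4) by (simp_all add: gR_def circumgyrocenter_def ein_gyrodist_def ein_gamma_def)
  then have "(ein_gamma s (ein_add s (- A) Oc))\<^sup>2
      * ((m1 + m2 + m3)\<^sup>2 + 2 * (m1 * m2 * (ein_gamma s (ein_add s (- A1) A2) - 1)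
          + m1 * m3 * (ein_gamma s (ein_add s (- A1) A3) - 1)
          + m2 * m3 * (ein_gamma s (ein_add s (- A2) A3) - 1)))
      = ((m1 + m2 + m3) * gR)\<^sup>2"
    using ein_gamma_gyrobarycentric3_gyrodiff[OF s A1 A2 A3 Oc A assms(7,8)]
    by (simp add: gR_def algebra_simps)
  moreover have "ein_add s (- A1) Oc \<noteq> 0"
    using circumgyroradius_neq_0[OF s assms(3,4)] by (simp add: ein_gyrodist_def)
  ultimately show ?thesis
    using norm_eq_of_ein_gamma_sq_eq[OF s ein_gyrodiff_mem_ball[OF s A Oc]
        ein_gyrodiff_mem_ball[OF s A1 Oc]] assms(5,9,10)
    by (simp add: ein_gyrodist_def gR_def ein_gamma_def)
qed

end
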